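(* In the model described in the context, Algorithm 1 with any threshold $t\ge f+1$ satisfies weak accuracy.
   Context: Model. An asynchronous system has client processes (writers, readers, auditors) and $n$ storage objects $o_1,\dots,o_n$. Each $o_k$ is a linearisable loggable read/write register with a log $L_k$ (initially empty). Its rw-read() returns the current block and appends $\langle p_r,\mathit{label}(b)\rangle$ to $L_k$, where $p_r$ is the invoking reader and $\mathit{label}(b)$ identifies the value from which $b$ was derived; rw-getLog() returns $L_k$. Correct objects create records only for rw-read operations they actually executed. A register over values $\mathbb{V}$ is emulated by information dispersal: block $b_{v_k}$ of $v$ is stored at $o_k$, and any $\tau>f$ distinct blocks recover $v$. Reads are fast. Faults. At most $f$ storage objects are faulty; a faulty object may crash, omit its block, omit log records from auditors, and report records of nonexistent reads. Providing set $P_{p_r,v}$: the set of objects that received a write of $b_{v_k}$ and responded $b_{v_k}$ to a read request of $p_r$. Algorithm 1 (a-audit with threshold $t$): 1. Invoke rw-getLog on all $n$ objects in parallel, and wait for responses from at least $n-f$ of them; let $L[k]$ be the log received from $o_k$. 2. For every record $\langle p_r,\mathit{label}(v)\rangle$ in some $L[k]$, let $\mathcal{E}_{p_r,v}=\{k:\langle p_r,\mathit{label}(v)\rangle\in L[k]\}$, and add it to $E_A$ iff $|\mathcal{E}_{p_r,v}|\ge t$. 3. Return $E_A$. Weak accuracy: for every correct reader $p_r$ that never invoked an a-read before the audit (so $P_{p_r,v}=\varnothing$), $\mathcal{E}_{p_r,v}\notin E_A$ for all $v$. *)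

theory Defs
  imports Main
begin

text \<open>Objects are indexed by natural numbers 0..<n. A log record is a pair
  (reader, label). The auditor receives, from every object k in the responding
  set R, a log L k (a list of records).\<close>

definition evidence_set :: "nat set \<Rightarrow> (nat \<Rightarrow> ('p \<times> 'l) list) \<Rightarrow> 'p \<Rightarrow> 'l \<Rightarrow> nat set" where
  "evidence_set R L p l = {k \<in> R. (p, l) \<in> set (L k)}"

text \<open>Output of Algorithm 1 (a-audit with threshold t): the set E_A of
  evidence sets, each tagged with its reader and label, for every record that
  appears in some received log and whose evidence set has size at least t.\<close>
definition a_audit :: "nat \<Rightarrow> nat set \<Rightarrow> (nat \<Rightarrow> ('p \<times> 'l) list) \<Rightarrow> ('p \<times> 'l \<times> nat set) set" where
  "a_audit t R L = {(p, l, E). (\<exists>k\<in>R. (p, l) \<in> set (L k)) \<and>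
                                E = evidence_set R L p l \<and> card E \<ge> t}"

end

theory Submission
  imports Defs
begin

text \<open>A correct object logs only reads it executed, and a correct reader that never
  invoked an a-read caused no executed reads. Hence every object whose log holds a
  record of such a reader is faulty, so its evidence set has at most \<open>f < t\<close> elements
  and never passes the threshold.\<close>

lemma a_audit_card_ge:
  assumes "(p, l, E) \<in> a_audit t R L"
  shows "E = evidence_set R L p l" and "t \<le> card E"
  using assms by (auto simp: a_audit_def)

lemma evidence_set_subset:
  assumes "\<And>k. k \<in> R \<Longrightarrow> (p, l) \<in> set (L k) \<Longrightarrow> k \<in> F"
  shows "evidence_set R L p l \<subseteq> F"
  using assms by (auto simp: evidence_set_def)

lemma a_audit_threshold_exceeds_card:
  assumes "finite F" and "card F < t"
    and "\<And>k. k \<in> R \<Longrightarrow> (p, l) \<in> set (L k) \<Longrightarrow> k \<in> F"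
  shows "(p, l, E) \<notin> a_audit t R L"
proof
  assume audited: "(p, l, E) \<in> a_audit t R L"
  then have "E \<subseteq> F"
    using a_audit_card_ge(1) evidence_set_subset assms(3) by metis
  then have "card E \<le> card F"
    using \<open>finite F\<close> by (rule card_mono[rotated])
  with a_audit_card_ge(2)[OF audited] \<open>card F < t\<close> show False
    by linarith
qed

theorem lemma6:
  fixes n f t :: nat
    and F :: "nat set"                       \<comment> \<open>faulty storage objects\<close>
    and R :: "nat set"                       \<comment> \<open>objects whose getLog responses were received\<close>
    and L :: "nat \<Rightarrow> ('p \<times> 'l) list"          \<comment> \<open>log received from object k\<close>
    and executed :: "nat \<Rightarrow> 'p \<Rightarrow> 'l \<Rightarrow> bool" \<comment> \<open>object k executed an rw-read of reader p on a block derived from a value labelled l\<close>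
    and correct_reader :: "'p \<Rightarrow> bool"
    and invoked_aread :: "'p \<Rightarrow> bool"      \<comment> \<open>reader invoked an a-read before the audit\<close>
    and label :: "'v \<Rightarrow> 'l"
    and p :: 'p
  assumes F_sub: "F \<subseteq> {0..<n}"
    and F_card: "card F \<le> f"
    and R_sub: "R \<subseteq> {0..<n}"
    and R_card: "card R \<ge> n - f"
    and correct_logs: "\<And>k q l. k \<in> R \<Longrightarrow> k \<notin> F \<Longrightarrow> (q, l) \<in> set (L k) \<Longrightarrow> executed k q l"
    and reads_from_areads: "\<And>k q l. executed k q l \<Longrightarrow> correct_reader q \<Longrightarrow> invoked_aread q"
    and thr: "t \<ge> f + 1"
    and p_correct: "correct_reader p"
    and p_no_read: "\<not> invoked_aread p"
  shows "\<forall>v E. (p, label v, E) \<notin> a_audit t R L"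
proof (intro allI)
  fix v E
  have "finite F"
    using F_sub finite_subset by blast
  moreover have "card F < t"
    using F_card thr by linarith
  moreover have "k \<in> F" if "k \<in> R" and "(p, label v) \<in> set (L k)" for k
    using that correct_logs reads_from_areads p_correct p_no_read by blast
  ultimately show "(p, label v, E) \<notin> a_audit t R L"
    by (rule a_audit_threshold_exceeds_card)
qed

end
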